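(* Let $p\in\mathbb{R}[x_1,x_2]_{2d}$ (not necessarily a sum of squares). For every $\mathbf{u}=(u_1,u_2)\in\mathbb{R}[x_1,x_2]_d^2$ with $\nabla f_p(\mathbf{u})=0$ and $\nabla^2 f_p(\mathbf{u})\succeq0$, the form $u_1^2+u_2^2$ is the projection of $p$ onto the cone $\Sigma[x_1,x_2]_{2d}$ with respect to the inner product defining $f_p$; that is, $f_p(\mathbf{u})=\|u_1^2+u_2^2-p\|^2\le\|q-p\|^2$ for all $q\in\Sigma[x_1,x_2]_{2d}$.
   Context: $\mathbb{R}[x_1,x_2]_n$ denotes the space of real binary forms (homogeneous polynomials in $x_1,x_2$) of degree $n$, and $\Sigma[x_1,x_2]_{2d}$ the cone of sums of squares of binary forms of degree $d$. Fix any inner product $\langle\cdot,\cdot\rangle$ on $\mathbb{R}[x_1,x_2]_{2d}$ with norm $\|\cdot\|$, and let $f_p(\mathbf{u})=\|u_1^2+u_2^2-p\|^2$ on $\mathbb{R}[x_1,x_2]_d^2$; derivatives are with respect to this finite-dimensional real vector space ($\nabla f_p(\mathbf{u})=0$: all first directional derivatives vanish; $\nabla^2 f_p(\mathbf{u})\succeq0$: all second directional derivatives are nonnegative). *)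

theory Defs
  imports "HOL-Analysis.Analysis" "HOL-Computational_Algebra.Polynomial"
begin

text \<open>A real binary form of degree n, sum of a_i x1^i x2^(n-i), is represented by its
  dehomogenisation, the univariate polynomial sum of a_i x^i, of degree at most n.
  This identification is a linear isomorphism compatible with multiplication.\<close>

definition bforms :: "nat \<Rightarrow> real poly set" where
  "bforms n = {q. degree q \<le> n}"

definition sos_cone :: "nat \<Rightarrow> real poly set" where
  "sos_cone d = {q. \<exists>gs. (\<forall>g\<in>set gs. g \<in> bforms d) \<and> q = sum_list (map (\<lambda>g. g^2) gs)}"

definition inner_prod_on :: "real poly set \<Rightarrow> (real poly \<Rightarrow> real poly \<Rightarrow> real) \<Rightarrow> bool" where
  "inner_prod_on V ip \<longleftrightarrow>
     (\<forall>x\<in>V. \<forall>y\<in>V. ip x y = ip y x) \<and>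
     (\<forall>x\<in>V. \<forall>y\<in>V. \<forall>z\<in>V. ip (x + y) z = ip x z + ip y z) \<and>
     (\<forall>c. \<forall>x\<in>V. \<forall>y\<in>V. ip (smult c x) y = c * ip x y) \<and>
     (\<forall>x\<in>V. x \<noteq> 0 \<longrightarrow> ip x x > 0)"

definition fp :: "(real poly \<Rightarrow> real poly \<Rightarrow> real) \<Rightarrow> real poly \<Rightarrow> real poly \<Rightarrow> real poly \<Rightarrow> real" where
  "fp ip p u1 u2 = ip (u1^2 + u2^2 - p) (u1^2 + u2^2 - p)"

definition fp_line :: "(real poly \<Rightarrow> real poly \<Rightarrow> real) \<Rightarrow> real poly \<Rightarrow> real poly \<Rightarrow> real poly
    \<Rightarrow> real poly \<Rightarrow> real poly \<Rightarrow> real \<Rightarrow> real" where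
  "fp_line ip p u1 u2 v1 v2 t = fp ip p (u1 + smult t v1) (u2 + smult t v2)"

end

theory Submission
  imports Defs "HOL-Computational_Algebra.Polynomial_Factorial" "HOL-Computational_Algebra.Field_as_Ring"
begin

text \<open>
  Let r = u1^2 + u2^2 - p and L q = <r, q>. The first-order condition says that L vanishes on all
  u1 v1 + u2 v2, in particular on u1^2 + u2^2; the second-order condition says
  2 |u1 v1 + u2 v2|^2 + L (v1^2) + L (v2^2) \<ge> 0. The heart of the proof is that these force
  L (g^2) \<ge> 0 for every g of degree d. Then L \<ge> 0 on the cone, so
  |q - p|^2 = |r|^2 + 2 L (q - u1^2 - u2^2) + |q - u1^2 - u2^2|^2 \<ge> |r|^2.

  For L (g^2) \<ge> 0 write (u1, u2) = D (a1, a2) with a1, a2 coprime and put \<sigma> = a1^2 + a2^2.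
  The directions (- a2 \<phi>, a1 \<phi>) are syzygies of (u1, u2), and along them the second-order
  condition gives L (\<sigma> \<phi>^2) \<ge> 0, and moreover L (\<phi> w) = 0 for all w whenever
  L (\<sigma> \<phi>^2) = 0. The first-order condition says that L kills the multiples of D; dividing
  out common factors with \<sigma> one finds a divisor E of D, coprime to \<sigma>, whose multiples L still
  kills. Modulo E the element a1 + i a2 is invertible, so g = (a1 + i a2)(\<phi>1 + i \<phi>2) + E \<rho> and
  hence g^2 = \<sigma> \<phi>1^2 + \<sigma> \<phi>2^2 + E z, giving L (g^2) = L (\<sigma> \<phi>1^2) + L (\<sigma> \<phi>2^2) \<ge> 0.
\<close>

section \<open>Degree bounds and division by a1 + i a2\<close>

lemma nonneg_quadratic_leading_coeff:
  fixes c A :: real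
  assumes "\<forall>t. 0 \<le> c + t^2 * A"
  shows "0 \<le> A"
proof (rule ccontr)
  assume "\<not> 0 \<le> A"
  define t where "t = sqrt ((\<bar>c\<bar> + 1) / - A)"
  have "c + t^2 * A = c - (\<bar>c\<bar> + 1)"
    using \<open>\<not> 0 \<le> A\<close> unfolding t_def by (simp add: field_simps)
  moreover have "0 \<le> c + t^2 * A"
    using assms by blast
  ultimately show False
    using abs_ge_self[of c] by linarith
qed

lemma nonneg_affine_slope_zero:
  fixes c b :: real
  assumes "\<forall>t. 0 \<le> c + t * b"
  shows "b = 0"
proof (rule ccontr)
  assume "b \<noteq> 0"
  define t where "t = - (\<bar>c\<bar> + 1) / b"
  have "c + t * b = c - (\<bar>c\<bar> + 1)"
    using \<open>b \<noteq> 0\<close> unfolding t_def by simp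
  moreover have "0 \<le> c + t * b"
    using assms by blast
  ultimately show False
    using abs_ge_self[of c] by linarith
qed

lemma complex_solve_linear:
  fixes \<alpha>1 \<alpha>2 c1 c2 :: real
  assumes "\<alpha>1^2 + \<alpha>2^2 \<noteq> 0"
  obtains t1 t2 where "\<alpha>1 * t1 - \<alpha>2 * t2 = c1" "\<alpha>2 * t1 + \<alpha>1 * t2 = c2"
proof -
  define z where "z = Complex c1 c2 / Complex \<alpha>1 \<alpha>2"
  have "Complex \<alpha>1 \<alpha>2 \<noteq> 0"
    using assms by (auto simp: complex_eq_iff)
  then have "Complex \<alpha>1 \<alpha>2 * z = Complex c1 c2"
    unfolding z_def by simp
  then have "Re (Complex \<alpha>1 \<alpha>2 * z) = c1" "Im (Complex \<alpha>1 \<alpha>2 * z) = c2"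
    by simp_all
  then show thesis
    using that[of "Re z" "Im z"] by (simp add: algebra_simps)
qed

lemma coprime_imp_bezout:
  fixes a b :: "'a :: euclidean_ring_gcd"
  assumes "coprime a b"
  obtains s t where "s * a + t * b = 1"
  using bezout_coefficients_fst_snd[of a b] assms by (metis coprime_iff_gcd_eq_1)

lemma degree_mult_leI:
  fixes p q :: "'a :: comm_semiring_0 poly"
  shows "degree p \<le> m \<Longrightarrow> degree q \<le> n \<Longrightarrow> degree (p * q) \<le> m + n"
  using degree_mult_le[of p q] by linarith

lemma degree_power2_leI:
  fixes p :: "'a :: comm_semiring_1 poly"
  shows "degree p \<le> m \<Longrightarrow> degree (p^2) \<le> 2 * m"
  using degree_mult_leI[of p m p m] by (simp add: power2_eq_square)

lemma degree_cofactor_le: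
  fixes p q :: "'a :: {comm_semiring_0, semiring_no_zero_divisors} poly"
  assumes "p \<noteq> 0" and "degree (p * q) \<le> n"
  shows "degree q \<le> n - degree p"
  using assms by (cases "q = 0") (simp_all add: degree_mult_eq)

lemma degree_mod_le:
  fixes x y :: "'a :: field poly"
  assumes "y \<noteq> 0" and "degree y \<le> n"
  shows "degree (x mod y) \<le> n"
  using degree_mod_less[OF assms(1), of x] assms(2) by auto

lemma poly_split_at_degree:
  fixes z :: "'a :: comm_semiring_1 poly"
  assumes "degree z \<le> m + n"
  shows "z = poly_cutoff m z + monom 1 m * poly_shift m z"
    and "degree (poly_cutoff m z) \<le> m" and "degree (poly_shift m z) \<le> n"
proof -
  show "z = poly_cutoff m z + monom 1 m * poly_shift m z"
    by (rule poly_eqI) (auto simp: coeff_poly_cutoff coeff_poly_shift coeff_monom_mult)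
  show "degree (poly_cutoff m z) \<le> m"
    by (rule degree_le) (simp add: coeff_poly_cutoff)
  show "degree (poly_shift m z) \<le> n"
    using assms by (intro degree_le) (auto simp: coeff_poly_shift intro: coeff_eq_0)
qed

lemma coprime_combination_degree_le:
  fixes a1 a2 w :: "'a :: field_gcd poly"
  assumes "coprime a1 a2" and "a2 \<noteq> 0" and "degree a1 \<le> degree a2"
    and "degree a2 \<le> m + 1" and "degree w \<le> m + degree a2"
  shows "\<exists>y1 y2. degree y1 \<le> m \<and> degree y2 \<le> m \<and> a1 * y1 + a2 * y2 = w"
proof -
  obtain s t where st: "s * a1 + t * a2 = 1"
    using coprime_imp_bezout[OF assms(1)] .
  define q where "q = (s * w) div a2"
  define y1 where "y1 = (s * w) mod a2"
  define y2 where "y2 = t * w + a1 * q"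
  have "s * w = q * a2 + y1"
    unfolding q_def y1_def by simp
  then have "a1 * y1 + a2 * y2 = (s * a1 + t * a2) * w"
    unfolding y2_def by (simp add: algebra_simps)
  then have comb: "a1 * y1 + a2 * y2 = w"
    using st by simp
  have y1: "y1 = 0 \<or> degree y1 < degree a2"
    unfolding y1_def using degree_mod_less'[OF assms(2)] by blast
  then have "degree (a1 * y1) \<le> m + degree a2"
    using degree_mult_le[of a1 y1] assms(3,4) by auto
  moreover have "a2 * y2 = w - a1 * y1"
    using comb by (simp add: algebra_simps)
  ultimately have "degree (a2 * y2) \<le> m + degree a2"
    using assms(5) by (simp add: degree_diff_le)
  then have "degree y2 \<le> m + degree a2 - degree a2"
    by (rule degree_cofactor_le[OF assms(2)])
  moreover have "degree y1 \<le> m"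
    using y1 assms(4) by auto
  ultimately show ?thesis
    using comb by auto
qed

lemma complex_pair_cancel_top:
  fixes a1 a2 r1 r2 :: "real poly"
  assumes lead: "coeff a1 a ^ 2 + coeff a2 a ^ 2 \<noteq> 0"
    and a1: "degree a1 \<le> a" and a2: "degree a2 \<le> a" and am: "a \<le> m"
    and r1: "degree r1 \<le> m" and r2: "degree r2 \<le> m"
  obtains t1 t2 where
    "\<forall>i\<ge>m. coeff (r1 - (a1 * monom t1 (m - a) - a2 * monom t2 (m - a))) i = 0"
    "\<forall>i\<ge>m. coeff (r2 - (a2 * monom t1 (m - a) + a1 * monom t2 (m - a))) i = 0"
proof -
  obtain t1 t2 where t: "coeff a1 a * t1 - coeff a2 a * t2 = coeff r1 m"
    "coeff a2 a * t1 + coeff a1 a * t2 = coeff r2 m"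
    using complex_solve_linear[OF lead] .
  have shift: "coeff (b * monom t (m - a)) i = t * coeff b (i + a - m)" if "m \<le> i" for b t i
    using that am by (auto simp: mult.commute[of b] coeff_monom_mult)
  have "coeff (r1 - (a1 * monom t1 (m - a) - a2 * monom t2 (m - a))) i = 0 \<and>
      coeff (r2 - (a2 * monom t1 (m - a) + a1 * monom t2 (m - a))) i = 0" if "m \<le> i" for i
  proof (cases "i = m")
    case True
    then show ?thesis
      using t by (simp add: shift algebra_simps)
  next
    case False
    then have "coeff r1 i = 0" "coeff r2 i = 0" "coeff a1 (i + a - m) = 0" "coeff a2 (i + a - m) = 0"
      using \<open>m \<le> i\<close> r1 r2 a1 a2 by (auto intro: coeff_eq_0)
    with \<open>m \<le> i\<close> show ?thesis
      by (simp add: shift)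
  qed
  then show thesis
    using that by blast
qed

text \<open>Division with remainder by a1 + i a2, written in real and imaginary parts.\<close>

lemma complex_pair_division:
  fixes a1 a2 r1 r2 :: "real poly"
  assumes lead: "coeff a1 a ^ 2 + coeff a2 a ^ 2 \<noteq> 0"
    and a1: "degree a1 \<le> a" and a2: "degree a2 \<le> a"
  shows "\<forall>i\<ge>m. coeff r1 i = 0 \<Longrightarrow> \<forall>i\<ge>m. coeff r2 i = 0 \<Longrightarrow>
    \<exists>\<theta>1 \<theta>2. degree \<theta>1 \<le> m - a - 1 \<and> degree \<theta>2 \<le> m - a - 1 \<and>
      (\<forall>i\<ge>a. coeff (r1 - (a1 * \<theta>1 - a2 * \<theta>2)) i = 0) \<and>
      (\<forall>i\<ge>a. coeff (r2 - (a2 * \<theta>1 + a1 * \<theta>2)) i = 0)"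
proof (induction m arbitrary: r1 r2)
  case 0
  then show ?case
    by (intro exI[of _ 0]) simp
next
  case (Suc k)
  show ?case
  proof (cases "a \<le> k")
    case False
    then show ?thesis
      using Suc.prems by (intro exI[of _ 0]) simp
  next
    case True
    have "degree r1 \<le> k" "degree r2 \<le> k"
      using Suc.prems by (auto intro!: degree_le)
    then obtain t1 t2 where top:
      "\<forall>i\<ge>k. coeff (r1 - (a1 * monom t1 (k - a) - a2 * monom t2 (k - a))) i = 0"
      "\<forall>i\<ge>k. coeff (r2 - (a2 * monom t1 (k - a) + a1 * monom t2 (k - a))) i = 0"
      using complex_pair_cancel_top[OF lead a1 a2 True] by blast
    obtain \<theta>1 \<theta>2 where \<theta>: "degree \<theta>1 \<le> k - a - 1" "degree \<theta>2 \<le> k - a - 1"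
      "\<forall>i\<ge>a. coeff (r1 - (a1 * monom t1 (k - a) - a2 * monom t2 (k - a)) - (a1 * \<theta>1 - a2 * \<theta>2)) i = 0"
      "\<forall>i\<ge>a. coeff (r2 - (a2 * monom t1 (k - a) + a1 * monom t2 (k - a)) - (a2 * \<theta>1 + a1 * \<theta>2)) i = 0"
      using Suc.IH[OF top] by blast
    have deg: "degree (\<theta>1 + monom t1 (k - a)) \<le> Suc k - a - 1" "degree (\<theta>2 + monom t2 (k - a)) \<le> Suc k - a - 1"
      using \<theta>(1,2) True by (auto intro!: degree_add_le order.trans[OF degree_monom_le])
    have eq: "r1 - (a1 * (\<theta>1 + monom t1 (k - a)) - a2 * (\<theta>2 + monom t2 (k - a)))
        = r1 - (a1 * monom t1 (k - a) - a2 * monom t2 (k - a)) - (a1 * \<theta>1 - a2 * \<theta>2)"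
      "r2 - (a2 * (\<theta>1 + monom t1 (k - a)) + a1 * (\<theta>2 + monom t2 (k - a)))
        = r2 - (a2 * monom t1 (k - a) + a1 * monom t2 (k - a)) - (a2 * \<theta>1 + a1 * \<theta>2)"
      by (simp_all add: algebra_simps)
    have rem: "\<forall>i\<ge>a. coeff (r1 - (a1 * (\<theta>1 + monom t1 (k - a)) - a2 * (\<theta>2 + monom t2 (k - a)))) i = 0"
      "\<forall>i\<ge>a. coeff (r2 - (a2 * (\<theta>1 + monom t1 (k - a)) + a1 * (\<theta>2 + monom t2 (k - a)))) i = 0"
      unfolding eq using \<theta>(3,4) by blast+
    show ?thesis
      using deg rem by blast
  qed
qed

lemma sum_squares_congruence_identity:
  fixes a1 a2 \<phi>1 \<phi>2 \<rho>1 \<rho>2 E g :: "'a :: comm_ring_1"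
  assumes "g = (a1 * \<phi>1 - a2 * \<phi>2) + E * \<rho>1" and "0 = (a2 * \<phi>1 + a1 * \<phi>2) + E * \<rho>2"
  shows "g^2 = (a1^2 + a2^2) * \<phi>1^2 + (a1^2 + a2^2) * \<phi>2^2 + E * (2 * g * \<rho>1 - E * (\<rho>1^2 + \<rho>2^2))"
proof -
  have h1: "a1 * \<phi>1 - a2 * \<phi>2 = g - E * \<rho>1" and h2: "a2 * \<phi>1 + a1 * \<phi>2 = - (E * \<rho>2)"
    using assms by (simp_all add: algebra_simps eq_neg_iff_add_eq_0)
  have "(a1^2 + a2^2) * \<phi>1^2 + (a1^2 + a2^2) * \<phi>2^2 = (a1 * \<phi>1 - a2 * \<phi>2)^2 + (a2 * \<phi>1 + a1 * \<phi>2)^2"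
    by (simp add: algebra_simps power2_eq_square)
  also have "\<dots> = g^2 - E * (2 * g * \<rho>1 - E * (\<rho>1^2 + \<rho>2^2))"
    unfolding h1 h2 by (simp add: algebra_simps power2_eq_square)
  finally show ?thesis
    by (simp add: algebra_simps)
qed

section \<open>Nonnegativity of the critical functional on squares\<close>

text \<open>
  L stands for q \<mapsto> <u1^2 + u2^2 - p, q>, extended linearly to all polynomials, and N for the
  squared norm; first_order and second_order are, up to positive factors, the vanishing of the
  first and the nonnegativity of the second derivative of f_p at (u1, u2) in direction (v1, v2).
\<close>

locale sos_critical =
  fixes L :: "real poly \<Rightarrow> real" and N :: "real poly \<Rightarrow> real" and d :: nat and u1 u2 :: "real poly"
  assumes L_add: "L (x + y) = L x + L y"
    and L_smult: "L (smult c x) = c * L x"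
    and degree_u1: "degree u1 \<le> d" and degree_u2: "degree u2 \<le> d"
    and first_order: "degree v1 \<le> d \<Longrightarrow> degree v2 \<le> d \<Longrightarrow> L (u1 * v1 + u2 * v2) = 0"
    and second_order: "degree v1 \<le> d \<Longrightarrow> degree v2 \<le> d \<Longrightarrow>
      0 \<le> 2 * N (u1 * v1 + u2 * v2) + L (v1^2) + L (v2^2)"
begin

lemma L_zero [simp]: "L 0 = 0"
  using L_smult[of 0 0] by simp

lemma L_minus: "L (- x) = - L x"
  using L_smult[of "-1" x] by simp

lemma L_diff: "L (x - y) = L x - L y"
  using L_add[of x "- y"] by (simp add: L_minus)

lemma second_order_along_syzygy:
  assumes "degree X1 \<le> d" "degree X2 \<le> d" "degree y1 \<le> d" "degree y2 \<le> d"
    and syz: "u1 * X1 + u2 * X2 = 0"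
  shows "0 \<le> (2 * N (u1 * y1 + u2 * y2) + L (y1^2) + L (y2^2))
    + t * (2 * L (X1 * y1 + X2 * y2)) + t^2 * L (X1^2 + X2^2)"
proof -
  have deg: "degree (smult t X1 + y1) \<le> d" "degree (smult t X2 + y2) \<le> d"
    using assms by (auto intro!: degree_add_le order_trans[OF degree_smult_le])
  have "u1 * (smult t X1 + y1) + u2 * (smult t X2 + y2) = smult t (u1 * X1 + u2 * X2) + (u1 * y1 + u2 * y2)"
    by (simp add: algebra_simps smult_add_right)
  then have u: "u1 * (smult t X1 + y1) + u2 * (smult t X2 + y2) = u1 * y1 + u2 * y2"
    using syz by simp
  have sq: "(smult t X + y)^2 = smult (t^2) (X^2) + smult t (X * y + X * y) + y^2" for X y :: "real poly"
    by (simp add: power2_eq_square algebra_simps smult_add_right)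
  show ?thesis
    using second_order[OF deg] unfolding u sq L_add L_smult by (simp add: algebra_simps)
qed

lemma square_nonneg_if_zero:
  assumes "u1 = 0" "u2 = 0" "degree g \<le> d"
  shows "0 \<le> L (g^2)"
proof (rule nonneg_quadratic_leading_coeff)
  show "\<forall>t. 0 \<le> 2 * N 0 + t^2 * L (g^2)"
    using second_order_along_syzygy[of g 0 0 0] assms by simp
qed

end

locale sos_critical_factored = sos_critical +
  fixes D a1 a2 :: "real poly"
  assumes u1_eq: "u1 = D * a1" and u2_eq: "u2 = D * a2"
    and coprime_a: "coprime a1 a2" and D_nonzero: "D \<noteq> 0"
begin

definition deg_a :: nat where "deg_a = max (degree a1) (degree a2)"

definition \<sigma> :: "real poly" where "\<sigma> = a1^2 + a2^2"

text \<open>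
  As binary forms of degree d, u1 and u2 share the factor x2^\<kappa> D (D homogenised): \<kappa> is the
  order of their common zero at infinity not already accounted for by D.
\<close>

definition \<kappa> :: nat where "\<kappa> = d - deg_a - degree D"

lemma degree_a1: "degree a1 \<le> deg_a" and degree_a2: "degree a2 \<le> deg_a"
  unfolding deg_a_def by simp_all

lemma a_nonzero: "a1 \<noteq> 0 \<or> a2 \<noteq> 0"
  using coprime_a by auto

lemma deg_a_degree_D_le: "deg_a + degree D \<le> d"
proof -
  have "a1 \<noteq> 0 \<Longrightarrow> degree D + degree a1 \<le> d" "a2 \<noteq> 0 \<Longrightarrow> degree D + degree a2 \<le> d"
    using degree_u1 degree_u2 D_nonzero by (simp_all add: u1_eq u2_eq degree_mult_eq)
  then show ?thesis
    using a_nonzero unfolding deg_a_def by (cases "a1 = 0"; cases "a2 = 0") (auto simp: max_def)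
qed

lemma lead_coeff_sum_squares_nonzero: "coeff a1 deg_a ^ 2 + coeff a2 deg_a ^ 2 \<noteq> 0"
proof -
  have "coeff a1 deg_a \<noteq> 0 \<or> coeff a2 deg_a \<noteq> 0"
    using a_nonzero unfolding deg_a_def by (cases "a1 = 0"; cases "a2 = 0") (auto simp: max_def)
  then show ?thesis
    by (auto simp: add_nonneg_eq_0_iff)
qed

lemma degree_\<sigma>: "degree \<sigma> \<le> 2 * deg_a"
  unfolding \<sigma>_def using degree_power2_leI[OF degree_a1] degree_power2_leI[OF degree_a2]
  by (rule degree_add_le)

lemma combination_of_a:
  assumes "degree w \<le> d + deg_a"
  obtains y1 y2 where "degree y1 \<le> d" "degree y2 \<le> d" "a1 * y1 + a2 * y2 = w"
proof (cases "a2 \<noteq> 0 \<and> degree a1 \<le> degree a2")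
  case True
  then have "deg_a = degree a2"
    unfolding deg_a_def by simp
  then show thesis
    using coprime_combination_degree_le[OF coprime_a, of d w] True assms deg_a_degree_D_le that
    by auto
next
  case False
  then have "a1 \<noteq> 0" "degree a2 \<le> degree a1"
    using a_nonzero by auto
  moreover from this have "deg_a = degree a1"
    unfolding deg_a_def by simp
  ultimately obtain y2 y1 where "degree y2 \<le> d" "degree y1 \<le> d" "a2 * y2 + a1 * y1 = w"
    using coprime_combination_degree_le[OF coprime_a[unfolded coprime_commute[of a1]], of d w]
      assms deg_a_degree_D_le by auto
  then show thesis
    using that by (simp add: add.commute)
qed

lemma degree_syzygy:
  assumes "degree \<phi> \<le> d - deg_a"
  shows "degree (a1 * \<phi>) \<le> d" "degree (a2 * \<phi>) \<le> d"
  using degree_mult_leI[OF degree_a1 assms] degree_mult_leI[OF degree_a2 assms] deg_a_degree_D_le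
  by auto

lemma syzygy: "u1 * (- (a2 * \<phi>)) + u2 * (a1 * \<phi>) = 0"
  unfolding u1_eq u2_eq by (simp add: algebra_simps)

lemma syzygy_sum_squares: "(- (a2 * \<phi>))^2 + (a1 * \<phi>)^2 = \<sigma> * \<phi>^2"
  unfolding \<sigma>_def by (simp add: algebra_simps power2_eq_square)

lemma sigma_square_nonneg:
  assumes "degree \<phi> \<le> d - deg_a"
  shows "0 \<le> L (\<sigma> * \<phi>^2)"
proof (rule nonneg_quadratic_leading_coeff)
  have X: "degree (- (a2 * \<phi>)) \<le> d" "degree (a1 * \<phi>) \<le> d"
    using degree_syzygy[OF assms] by simp_all
  have "0 \<le> (2 * N (u1 * 0 + u2 * 0) + L (0^2) + L (0^2))
      + t * (2 * L (- (a2 * \<phi>) * 0 + a1 * \<phi> * 0)) + t^2 * L ((- (a2 * \<phi>))^2 + (a1 * \<phi>)^2)" for t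
    by (rule second_order_along_syzygy[OF X _ _ syzygy]) simp_all
  then show "\<forall>t. 0 \<le> 2 * N 0 + t^2 * L (\<sigma> * \<phi>^2)"
    unfolding syzygy_sum_squares by simp
qed

lemma sigma_square_zero_imp:
  assumes "degree \<phi> \<le> d - deg_a" and "L (\<sigma> * \<phi>^2) = 0" and "degree w \<le> d + deg_a"
  shows "L (\<phi> * w) = 0"
proof -
  obtain y1 y2 where y: "degree y1 \<le> d" "degree y2 \<le> d" "a1 * y1 + a2 * y2 = w"
    using combination_of_a[OF assms(3)] .
  have X: "degree (- (a2 * \<phi>)) \<le> d" "degree (a1 * \<phi>) \<le> d"
    using degree_syzygy[OF assms(1)] by simp_all
  have "0 \<le> (2 * N (u1 * - y2 + u2 * y1) + L ((- y2)^2) + L (y1^2))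
      + t * (2 * L (- (a2 * \<phi>) * - y2 + a1 * \<phi> * y1)) + t^2 * L ((- (a2 * \<phi>))^2 + (a1 * \<phi>)^2)" for t
    by (rule second_order_along_syzygy[OF X _ _ syzygy]) (simp_all add: y)
  then have "\<forall>t. 0 \<le> (2 * N (u1 * - y2 + u2 * y1) + L ((- y2)^2) + L (y1^2))
      + t * (2 * L (- (a2 * \<phi>) * - y2 + a1 * \<phi> * y1))"
    unfolding syzygy_sum_squares assms(2) by simp
  then have "2 * L (- (a2 * \<phi>) * - y2 + a1 * \<phi> * y1) = 0"
    by (rule nonneg_affine_slope_zero)
  moreover have "- (a2 * \<phi>) * - y2 + a1 * \<phi> * y1 = \<phi> * w"
    using y(3) by (auto simp: algebra_simps)
  ultimately show ?thesis
    by simp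
qed

definition annihilating :: "real poly \<Rightarrow> bool" where
  "annihilating E \<longleftrightarrow> E \<noteq> 0 \<and> degree E \<le> degree D \<and>
     (\<forall>z. degree z \<le> 2 * d - \<kappa> - degree E \<longrightarrow> L (E * z) = 0)"

lemma annihilatingD:
  assumes "annihilating E"
  shows "E \<noteq> 0" "degree E \<le> degree D" "degree z \<le> 2 * d - \<kappa> - degree E \<Longrightarrow> L (E * z) = 0"
  using assms unfolding annihilating_def by auto

lemma annihilating_D: "annihilating D"
proof -
  have "L (D * w) = 0" if w: "degree w \<le> d + deg_a" for w
  proof -
    obtain y1 y2 where y: "degree y1 \<le> d" "degree y2 \<le> d" "a1 * y1 + a2 * y2 = w"
      using combination_of_a[OF w] .
    then have "D * w = u1 * y1 + u2 * y2"
      unfolding u1_eq u2_eq by (auto simp: algebra_simps)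
    then show ?thesis
      using first_order[OF y(1,2)] by simp
  qed
  moreover have "2 * d - \<kappa> - degree D = d + deg_a"
    using deg_a_degree_D_le unfolding \<kappa>_def by linarith
  ultimately show ?thesis
    unfolding annihilating_def using D_nonzero by auto
qed

text \<open>
  In complex notation g = (a1 + i a2)(\<phi>1 + i \<phi>2) + E (r1 + i r2); a1 + i a2 is invertible
  modulo E because its norm \<sigma> is.
\<close>

lemma bezout_congruence:
  assumes E: "E \<noteq> 0" "degree E \<le> degree D" and coprime: "coprime \<sigma> E" and g: "degree g \<le> d"
  obtains \<phi>1 \<phi>2 r1 r2 where "degree \<phi>1 \<le> d - deg_a" "degree \<phi>2 \<le> d - deg_a"
    "degree r1 \<le> d - degree E" "degree r2 \<le> d - degree E"
    "g = (a1 * \<phi>1 - a2 * \<phi>2) + E * r1" "0 = (a2 * \<phi>1 + a1 * \<phi>2) + E * r2"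
proof -
  obtain s t where st: "s * \<sigma> + t * E = 1"
    using coprime_imp_bezout[OF coprime] .
  define q1 where "q1 = (a1 * s * g) div E"
  define q2 where "q2 = (- (a2 * s * g)) div E"
  define \<phi>1 where "\<phi>1 = (a1 * s * g) mod E"
  define \<phi>2 where "\<phi>2 = (- (a2 * s * g)) mod E"
  define r1 where "r1 = t * g + (a1 * q1 - a2 * q2)"
  define r2 where "r2 = a2 * q1 + a1 * q2"
  have \<phi>: "\<phi>1 = a1 * s * g - q1 * E" "\<phi>2 = - (a2 * s * g) - q2 * E"
    using div_mult_mod_eq[of "a1 * s * g" E] div_mult_mod_eq[of "- (a2 * s * g)" E]
    unfolding \<phi>1_def \<phi>2_def q1_def q2_def by (simp_all add: eq_diff_eq add.commute)
  have "(a1 * \<phi>1 - a2 * \<phi>2) + E * r1 = (s * \<sigma> + t * E) * g"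
    unfolding \<phi> r1_def \<sigma>_def by (simp add: algebra_simps power2_eq_square)
  then have eq1: "g = (a1 * \<phi>1 - a2 * \<phi>2) + E * r1"
    using st by simp
  have eq2: "0 = (a2 * \<phi>1 + a1 * \<phi>2) + E * r2"
    unfolding \<phi> r2_def by (simp add: algebra_simps)
  have "degree E \<le> d - deg_a"
    using E(2) deg_a_degree_D_le by linarith
  then have d\<phi>: "degree \<phi>1 \<le> d - deg_a" "degree \<phi>2 \<le> d - deg_a"
    unfolding \<phi>1_def \<phi>2_def using degree_mod_le[OF E(1)] by blast+
  have "degree (a1 * \<phi>1 - a2 * \<phi>2) \<le> d" "degree (a2 * \<phi>1 + a1 * \<phi>2) \<le> d"
    using degree_syzygy[OF d\<phi>(1)] degree_syzygy[OF d\<phi>(2)] by (auto intro!: degree_diff_le degree_add_le)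
  moreover have "E * r1 = g - (a1 * \<phi>1 - a2 * \<phi>2)"
    using eq1 by (simp add: algebra_simps)
  moreover have "E * r2 = - (a2 * \<phi>1 + a1 * \<phi>2)"
    using eq2 by (simp add: eq_neg_iff_add_eq_0 add.commute)
  then have "degree (E * r2) = degree (a2 * \<phi>1 + a1 * \<phi>2)"
    by (simp only: degree_minus)
  ultimately have "degree (E * r1) \<le> d" "degree (E * r2) \<le> d"
    using g by (simp_all add: degree_diff_le)
  then have "degree r1 \<le> d - degree E" "degree r2 \<le> d - degree E"
    using degree_cofactor_le[OF E(1)] by blast+
  with d\<phi> eq1 eq2 show thesis
    using that by blast
qed

lemma reduced_congruence:
  assumes E: "E \<noteq> 0" "degree E \<le> degree D" and coprime: "coprime \<sigma> E" and g: "degree g \<le> d"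
  obtains \<phi>1 \<phi>2 \<rho>1 \<rho>2 where "degree \<phi>1 \<le> d - deg_a" "degree \<phi>2 \<le> d - deg_a"
    "degree \<rho>1 \<le> d - degree E - \<kappa>" "degree \<rho>2 \<le> d - degree E - \<kappa>"
    "g = (a1 * \<phi>1 - a2 * \<phi>2) + E * \<rho>1" "0 = (a2 * \<phi>1 + a1 * \<phi>2) + E * \<rho>2"
proof -
  obtain \<phi>1 \<phi>2 r1 r2 where \<phi>: "degree \<phi>1 \<le> d - deg_a" "degree \<phi>2 \<le> d - deg_a"
    and r: "degree r1 \<le> d - degree E" "degree r2 \<le> d - degree E"
    and eq: "g = (a1 * \<phi>1 - a2 * \<phi>2) + E * r1" "0 = (a2 * \<phi>1 + a1 * \<phi>2) + E * r2"
    using bezout_congruence[OF assms] .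
  have "\<forall>i\<ge>Suc (d - degree E). coeff r1 i = 0" "\<forall>i\<ge>Suc (d - degree E). coeff r2 i = 0"
    using r by (auto intro: coeff_eq_0)
  from complex_pair_division[OF lead_coeff_sum_squares_nonzero degree_a1 degree_a2 this]
  obtain \<theta>1 \<theta>2 where \<theta>: "degree \<theta>1 \<le> d - degree E - deg_a" "degree \<theta>2 \<le> d - degree E - deg_a"
    and rem: "\<forall>i\<ge>deg_a. coeff (r1 - (a1 * \<theta>1 - a2 * \<theta>2)) i = 0"
      "\<forall>i\<ge>deg_a. coeff (r2 - (a2 * \<theta>1 + a1 * \<theta>2)) i = 0"
    by auto
  have bounds: "deg_a \<le> d - degree E - \<kappa>" "degree E \<le> d - deg_a"
    using E(2) deg_a_degree_D_le unfolding \<kappa>_def by linarith+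
  have "degree (E * \<theta>1) \<le> d - deg_a" "degree (E * \<theta>2) \<le> d - deg_a"
    using degree_mult_leI[OF order.refl \<theta>(1), of E] degree_mult_leI[OF order.refl \<theta>(2), of E] bounds(2)
    by linarith+
  then have \<phi>': "degree (\<phi>1 + E * \<theta>1) \<le> d - deg_a" "degree (\<phi>2 + E * \<theta>2) \<le> d - deg_a"
    using \<phi> by (simp_all add: degree_add_le)
  have \<rho>: "degree (r1 - (a1 * \<theta>1 - a2 * \<theta>2)) \<le> d - degree E - \<kappa>"
    "degree (r2 - (a2 * \<theta>1 + a1 * \<theta>2)) \<le> d - degree E - \<kappa>"
    using rem bounds(1) by (simp_all add: degree_le)
  have "g = (a1 * (\<phi>1 + E * \<theta>1) - a2 * (\<phi>2 + E * \<theta>2)) + E * (r1 - (a1 * \<theta>1 - a2 * \<theta>2))"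
    "0 = (a2 * (\<phi>1 + E * \<theta>1) + a1 * (\<phi>2 + E * \<theta>2)) + E * (r2 - (a2 * \<theta>1 + a1 * \<theta>2))"
    using eq by (simp_all add: algebra_simps)
  from that[OF \<phi>' \<rho> this] show thesis .
qed

lemma square_nonneg_if_coprime:
  assumes "annihilating E" and "coprime \<sigma> E" and g: "degree g \<le> d"
  shows "0 \<le> L (g^2)"
proof -
  note E = annihilatingD(1,2)[OF assms(1)] and L_E = annihilatingD(3)[OF assms(1)]
  obtain \<phi>1 \<phi>2 \<rho>1 \<rho>2 where \<phi>: "degree \<phi>1 \<le> d - deg_a" "degree \<phi>2 \<le> d - deg_a"
    and \<rho>: "degree \<rho>1 \<le> d - degree E - \<kappa>" "degree \<rho>2 \<le> d - degree E - \<kappa>"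
    and eq: "g = (a1 * \<phi>1 - a2 * \<phi>2) + E * \<rho>1" "0 = (a2 * \<phi>1 + a1 * \<phi>2) + E * \<rho>2"
    using reduced_congruence[OF E assms(2) g] .
  define z where "z = 2 * g * \<rho>1 - E * (\<rho>1^2 + \<rho>2^2)"
  have "g^2 = \<sigma> * \<phi>1^2 + \<sigma> * \<phi>2^2 + E * z"
    unfolding \<sigma>_def z_def by (rule sum_squares_congruence_identity[OF eq])
  moreover have "degree z \<le> 2 * d - \<kappa> - degree E"
  proof -
    have "degree (2 * g) \<le> d"
      using degree_add_le[OF g g] unfolding mult_2 .
    then have "degree (2 * g * \<rho>1) \<le> d + (d - degree E - \<kappa>)"
      by (rule degree_mult_leI[OF _ \<rho>(1)])
    moreover have "degree (E * (\<rho>1^2 + \<rho>2^2)) \<le> degree E + 2 * (d - degree E - \<kappa>)"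
      using degree_power2_leI[OF \<rho>(1)] degree_power2_leI[OF \<rho>(2)]
      by (intro degree_mult_leI[OF order.refl] degree_add_le)
    moreover have "degree E + \<kappa> \<le> d"
      using E(2) deg_a_degree_D_le unfolding \<kappa>_def by linarith
    ultimately show ?thesis
      unfolding z_def by (intro degree_diff_le) linarith+
  qed
  ultimately have "L (g^2) = L (\<sigma> * \<phi>1^2) + L (\<sigma> * \<phi>2^2)"
    using L_E by (simp add: L_add)
  then show ?thesis
    using sigma_square_nonneg[OF \<phi>(1)] sigma_square_nonneg[OF \<phi>(2)] by simp
qed

text \<open>If G divides both \<sigma> and E = G E', then \<sigma> (E' \<psi>)^2 is a multiple of E, hence killed by L.\<close>

lemma annihilating_cofactor_products:
  assumes "annihilating E" and EG: "E = G * E'" and "G dvd \<sigma>"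
    and \<psi>: "degree \<psi> \<le> d - deg_a - degree E' - \<kappa>" and w: "degree w \<le> d + deg_a"
  shows "L (E' * (\<psi> * w)) = 0"
proof -
  note E = annihilatingD(1,2)[OF assms(1)] and L_E = annihilatingD(3)[OF assms(1)]
  have "G \<noteq> 0" "E' \<noteq> 0"
    using E(1) EG by auto
  then have deg_E: "degree E = degree G + degree E'"
    unfolding EG by (rule degree_mult_eq)
  obtain \<sigma>' where \<sigma>': "\<sigma> = G * \<sigma>'"
    using \<open>G dvd \<sigma>\<close> by blast
  have bound: "degree E' + deg_a + \<kappa> \<le> d"
    using deg_E E(2) deg_a_degree_D_le unfolding \<kappa>_def by linarith
  define \<phi> where "\<phi> = E' * \<psi>"
  have \<phi>: "degree \<phi> \<le> d - deg_a"
    unfolding \<phi>_def using degree_mult_leI[OF order.refl \<psi>, of E'] bound by linarith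
  have "\<sigma> * \<phi>^2 = E * (\<sigma>' * E' * \<psi>^2)"
    unfolding \<phi>_def \<sigma>' EG by (simp add: algebra_simps power2_eq_square)
  moreover have "degree (\<sigma>' * E' * \<psi>^2) \<le> 2 * d - \<kappa> - degree E"
  proof (cases "\<sigma>' = 0")
    case False
    then have "degree G + degree \<sigma>' \<le> 2 * deg_a"
      using degree_\<sigma> \<open>G \<noteq> 0\<close> by (simp add: \<sigma>' degree_mult_eq)
    moreover have "degree (\<sigma>' * E' * \<psi>^2) \<le> degree \<sigma>' + degree E' + 2 * (d - deg_a - degree E' - \<kappa>)"
      by (intro degree_mult_leI[OF degree_mult_leI] degree_power2_leI \<psi> order.refl)
    ultimately show ?thesis
      using deg_E bound by linarith
  qed simp
  ultimately have "L (\<sigma> * \<phi>^2) = 0"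
    using L_E by simp
  then have "L (\<phi> * w) = 0"
    by (rule sigma_square_zero_imp[OF \<phi> _ w])
  then show ?thesis
    unfolding \<phi>_def by (simp add: mult.assoc)
qed

lemma annihilating_descent:
  assumes "annihilating E" and "\<not> coprime \<sigma> E"
  obtains E' where "annihilating E'" "degree E' < degree E"
proof -
  note E = annihilatingD(1,2)[OF assms(1)]
  define G where "G = gcd \<sigma> E"
  define E' where "E' = E div G"
  have EG: "E = G * E'"
    unfolding E'_def G_def by simp
  have "G \<noteq> 0" "E' \<noteq> 0"
    using E(1) EG by auto
  have "\<not> is_unit G"
    using assms(2) unfolding G_def by (simp add: coprime_iff_gcd_eq_1)
  then have "degree G > 0"
    using is_unit_iff_degree[OF \<open>G \<noteq> 0\<close>] by simp
  then have deg_E': "degree E' < degree E"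
    unfolding EG using degree_mult_eq[OF \<open>G \<noteq> 0\<close> \<open>E' \<noteq> 0\<close>] by simp
  define M where "M = d - deg_a - degree E' - \<kappa>"
  have "M + (d + deg_a) = 2 * d - \<kappa> - degree E'"
    using deg_E' E(2) deg_a_degree_D_le unfolding M_def \<kappa>_def by linarith
  have "L (E' * z) = 0" if z: "degree z \<le> 2 * d - \<kappa> - degree E'" for z
  proof -
    have split: "degree z \<le> M + (d + deg_a)"
      using z \<open>M + (d + deg_a) = 2 * d - \<kappa> - degree E'\<close> by simp
    have "G dvd \<sigma>"
      unfolding G_def by simp
    have "L (E' * (poly_cutoff M z * 1)) = 0"
      using poly_split_at_degree(2)[OF split] unfolding M_def
      by (intro annihilating_cofactor_products[OF assms(1) EG \<open>G dvd \<sigma>\<close>]) simp_all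
    moreover have "L (E' * (monom 1 M * poly_shift M z)) = 0"
      using poly_split_at_degree(3)[OF split] unfolding M_def
      by (intro annihilating_cofactor_products[OF assms(1) EG \<open>G dvd \<sigma>\<close>]) (simp_all add: degree_monom_le)
    moreover have "E' * z = E' * (poly_cutoff M z * 1) + E' * (monom 1 M * poly_shift M z)"
      by (simp only: mult_1_right flip: distrib_left poly_split_at_degree(1)[OF split])
    ultimately show ?thesis
      by (simp add: L_add)
  qed
  then have "annihilating E'"
    unfolding annihilating_def using \<open>E' \<noteq> 0\<close> deg_E' E(2) by auto
  then show thesis
    using that deg_E' by blast
qed

lemma square_nonneg_if_annihilating:
  assumes "annihilating E" and g: "degree g \<le> d"
  shows "0 \<le> L (g^2)"
  using assms(1)
proof (induction "degree E" arbitrary: E rule: less_induct)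
  case less
  show ?case
  proof (cases "coprime \<sigma> E")
    case True
    then show ?thesis
      using square_nonneg_if_coprime[OF less.prems _ g] by simp
  next
    case False
    then obtain E' where "annihilating E'" "degree E' < degree E"
      using annihilating_descent[OF less.prems] by blast
    then show ?thesis
      using less.hyps by blast
  qed
qed

end

context sos_critical
begin

lemma square_nonneg:
  assumes "degree g \<le> d"
  shows "0 \<le> L (g^2)"
proof (cases "u1 = 0 \<and> u2 = 0")
  case True
  then show ?thesis
    using square_nonneg_if_zero assms by blast
next
  case False
  interpret sos_critical_factored L N d u1 u2 "gcd u1 u2" "u1 div gcd u1 u2" "u2 div gcd u1 u2"
    using False by unfold_locales (auto intro: div_gcd_coprime)
  show ?thesis
    using square_nonneg_if_annihilating[OF annihilating_D assms] .
qed

lemma sos_nonneg: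
  assumes "q \<in> sos_cone d"
  shows "0 \<le> L q"
proof -
  obtain gs where "\<forall>g\<in>set gs. degree g \<le> d" and q: "q = sum_list (map (\<lambda>g. g^2) gs)"
    using assms unfolding sos_cone_def bforms_def by blast
  then show ?thesis
    by (induction gs arbitrary: q) (auto simp: L_add square_nonneg)
qed

lemma L_sum_squares_critical: "L (u1^2 + u2^2) = 0"
  using first_order[OF degree_u1 degree_u2] by (simp add: power2_eq_square)

end

section \<open>Inner products on forms and the derivatives of f_p\<close>

lemma deriv_poly: "deriv (poly P) = poly (pderiv (P :: 'a :: real_normed_field poly))"
  by (rule ext, rule DERIV_imp_deriv, rule poly_DERIV)

lemma poly_cutoff_add: "poly_cutoff n (x + y) = poly_cutoff n x + poly_cutoff n y"
  by (rule poly_eqI) (simp add: coeff_poly_cutoff)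

lemma poly_cutoff_smult: "poly_cutoff n (smult c x) = smult c (poly_cutoff n x)"
  by (rule poly_eqI) (simp add: coeff_poly_cutoff)

lemma bforms_poly_cutoff: "poly_cutoff (Suc n) q \<in> bforms n"
  unfolding bforms_def mem_Collect_eq by (rule degree_le) (simp add: coeff_poly_cutoff)

lemma poly_cutoff_bforms: "q \<in> bforms n \<Longrightarrow> poly_cutoff (Suc n) q = q"
  unfolding bforms_def by (rule poly_eqI) (auto simp: coeff_poly_cutoff intro: coeff_eq_0)

lemma bforms_add [simp]: "x \<in> bforms n \<Longrightarrow> y \<in> bforms n \<Longrightarrow> x + y \<in> bforms n"
  by (simp add: bforms_def degree_add_le)

lemma bforms_diff [simp]: "x \<in> bforms n \<Longrightarrow> y \<in> bforms n \<Longrightarrow> x - y \<in> bforms n"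
  by (simp add: bforms_def degree_diff_le)

lemma bforms_smult [simp]: "x \<in> bforms n \<Longrightarrow> smult c x \<in> bforms n"
  by (simp add: bforms_def order_trans[OF degree_smult_le])

lemma bforms_mult [simp]: "x \<in> bforms d \<Longrightarrow> y \<in> bforms d \<Longrightarrow> x * y \<in> bforms (2 * d)"
  unfolding bforms_def using degree_mult_leI[of x d y d] by simp

lemma bforms_power2 [simp]: "x \<in> bforms d \<Longrightarrow> x^2 \<in> bforms (2 * d)"
  using bforms_mult[of x d x] by (simp add: power2_eq_square)

lemma sos_cone_subset_bforms: "sos_cone d \<subseteq> bforms (2 * d)"
proof
  fix q assume "q \<in> sos_cone d"
  then obtain gs where "\<forall>g\<in>set gs. g \<in> bforms d" and "q = sum_list (map (\<lambda>g. g^2) gs)"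
    unfolding sos_cone_def by blast
  then show "q \<in> bforms (2 * d)"
    by (induction gs arbitrary: q) (auto simp: bforms_def degree_add_le degree_power2_leI)
qed

text \<open>Truncating q to degree n makes q \<mapsto> <r, q> linear on all polynomials.\<close>

definition cutoff_functional ::
    "(real poly \<Rightarrow> real poly \<Rightarrow> real) \<Rightarrow> nat \<Rightarrow> real poly \<Rightarrow> real poly \<Rightarrow> real" where
  "cutoff_functional ip n r q = ip r (poly_cutoff (Suc n) q)"

locale bform_inner =
  fixes ip :: "real poly \<Rightarrow> real poly \<Rightarrow> real" and n :: nat
  assumes inner_prod: "inner_prod_on (bforms n) ip"
begin

lemma ip_sym: "x \<in> bforms n \<Longrightarrow> y \<in> bforms n \<Longrightarrow> ip x y = ip y x"
  using inner_prod[unfolded inner_prod_on_def, THEN conjunct1] by blast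

lemma ip_add_left: "x \<in> bforms n \<Longrightarrow> y \<in> bforms n \<Longrightarrow> z \<in> bforms n \<Longrightarrow> ip (x + y) z = ip x z + ip y z"
  using inner_prod[unfolded inner_prod_on_def, THEN conjunct2, THEN conjunct1] by blast

lemma ip_smult_left: "x \<in> bforms n \<Longrightarrow> y \<in> bforms n \<Longrightarrow> ip (smult c x) y = c * ip x y"
  using inner_prod[unfolded inner_prod_on_def, THEN conjunct2, THEN conjunct2, THEN conjunct1] by blast

lemma ip_pos: "x \<in> bforms n \<Longrightarrow> x \<noteq> 0 \<Longrightarrow> 0 < ip x x"
  using inner_prod[unfolded inner_prod_on_def, THEN conjunct2, THEN conjunct2, THEN conjunct2] by blast

lemma ip_self_nonneg:
  assumes "x \<in> bforms n"
  shows "0 \<le> ip x x"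
proof (cases "x = 0")
  case True
  have "0 \<in> bforms n"
    by (simp add: bforms_def)
  then show ?thesis
    using True ip_smult_left[of 0 0 0] by simp
qed (use assms ip_pos in force)

lemma ip_add_right: "x \<in> bforms n \<Longrightarrow> y \<in> bforms n \<Longrightarrow> z \<in> bforms n \<Longrightarrow> ip z (x + y) = ip z x + ip z y"
  by (simp add: ip_sym[of z] ip_add_left)

lemma ip_smult_right: "x \<in> bforms n \<Longrightarrow> y \<in> bforms n \<Longrightarrow> ip y (smult c x) = c * ip y x"
  by (simp add: ip_sym[of y] ip_smult_left)

lemma ip_self_add:
  assumes "x \<in> bforms n" "y \<in> bforms n"
  shows "ip (x + y) (x + y) = ip x x + 2 * ip x y + ip y y"
  using assms by (simp add: ip_add_left ip_add_right ip_sym[of y x])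

lemma ip_self_add3:
  assumes "x \<in> bforms n" "y \<in> bforms n" "z \<in> bforms n"
  shows "ip (x + smult s y + smult t z) (x + smult s y + smult t z) =
    ip x x + 2 * s * ip x y + 2 * t * ip x z + s^2 * ip y y + 2 * s * t * ip y z + t^2 * ip z z"
  using assms by (simp add: ip_add_left ip_add_right ip_smult_left ip_smult_right
      ip_sym[of y x] ip_sym[of z x] ip_sym[of z y] power2_eq_square algebra_simps)

lemma ip_self_le_add:
  assumes "x \<in> bforms n" "y \<in> bforms n" and "0 \<le> ip x y"
  shows "ip x x \<le> ip (x + y) (x + y)"
  using assms ip_self_nonneg[of y] by (simp add: ip_self_add)

lemma cutoff_functional_eq: "q \<in> bforms n \<Longrightarrow> cutoff_functional ip n r q = ip r q"
  unfolding cutoff_functional_def by (simp add: poly_cutoff_bforms)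

lemma cutoff_functional_add:
  "r \<in> bforms n \<Longrightarrow>
    cutoff_functional ip n r (x + y) = cutoff_functional ip n r x + cutoff_functional ip n r y"
  unfolding cutoff_functional_def poly_cutoff_add
  by (rule ip_add_right[OF bforms_poly_cutoff bforms_poly_cutoff])

lemma cutoff_functional_smult:
  "r \<in> bforms n \<Longrightarrow> cutoff_functional ip n r (smult c x) = c * cutoff_functional ip n r x"
  unfolding cutoff_functional_def poly_cutoff_smult by (rule ip_smult_right[OF bforms_poly_cutoff])

end

lemma fp_line_derivatives:
  assumes ip: "inner_prod_on (bforms (2 * d)) ip" and p: "p \<in> bforms (2 * d)"
    and u: "u1 \<in> bforms d" "u2 \<in> bforms d" and v: "v1 \<in> bforms d" "v2 \<in> bforms d"
  shows "deriv (fp_line ip p u1 u2 v1 v2) 0 = 4 * ip (u1^2 + u2^2 - p) (u1 * v1 + u2 * v2)"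
    and "deriv (deriv (fp_line ip p u1 u2 v1 v2)) 0 =
      8 * ip (u1 * v1 + u2 * v2) (u1 * v1 + u2 * v2) + 4 * ip (u1^2 + u2^2 - p) (v1^2 + v2^2)"
proof -
  interpret bform_inner ip "2 * d"
    by (rule bform_inner.intro[OF ip])
  define r where "r = u1^2 + u2^2 - p"
  define m where "m = u1 * v1 + u2 * v2"
  define b where "b = v1^2 + v2^2"
  have V: "r \<in> bforms (2 * d)" "m \<in> bforms (2 * d)" "b \<in> bforms (2 * d)"
    unfolding r_def m_def b_def using p u v by simp_all
  have mm: "m + m \<in> bforms (2 * d)"
    by (rule bforms_add[OF V(2) V(2)])
  have "fp_line ip p u1 u2 v1 v2 =
    poly [:ip r r, 4 * ip r m, 4 * ip m m + 2 * ip r b, 4 * ip m b, ip b b:]"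
  proof
    fix t
    have "(u1 + smult t v1)^2 + (u2 + smult t v2)^2 - p = r + smult t (m + m) + smult (t^2) b"
      unfolding r_def m_def b_def by (simp add: power2_eq_square algebra_simps smult_add_right)
    then have "fp_line ip p u1 u2 v1 v2 t = ip r r + 2 * t * ip r (m + m) + 2 * t^2 * ip r b
        + t^2 * ip (m + m) (m + m) + 2 * t * t^2 * ip (m + m) b + (t^2)^2 * ip b b"
      unfolding fp_line_def fp_def by (simp only: ip_self_add3[OF V(1) mm V(3)])
    moreover have "ip r (m + m) = 2 * ip r m" "ip (m + m) b = 2 * ip m b" "ip (m + m) (m + m) = 4 * ip m m"
      using ip_add_right[OF V(2) V(2) V(1)] ip_add_left[OF V(2) V(2) V(3)] ip_self_add[OF V(2) V(2)]
      by simp_all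
    ultimately show "fp_line ip p u1 u2 v1 v2 t =
        poly [:ip r r, 4 * ip r m, 4 * ip m m + 2 * ip r b, 4 * ip m b, ip b b:] t"
      by (simp add: algebra_simps power2_eq_square power3_eq_cube power4_eq_xxxx)
  qed
  then show "deriv (fp_line ip p u1 u2 v1 v2) 0 = 4 * ip (u1^2 + u2^2 - p) (u1 * v1 + u2 * v2)"
    and "deriv (deriv (fp_line ip p u1 u2 v1 v2)) 0 =
      8 * ip (u1 * v1 + u2 * v2) (u1 * v1 + u2 * v2) + 4 * ip (u1^2 + u2^2 - p) (v1^2 + v2^2)"
    unfolding r_def m_def b_def by (simp_all add: deriv_poly pderiv_pCons poly_0_coeff_0)
qed

lemma second_order_critical_imp_sos_critical:
  assumes ip: "inner_prod_on (bforms (2 * d)) ip" and p: "p \<in> bforms (2 * d)"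
    and u: "u1 \<in> bforms d" "u2 \<in> bforms d"
    and grad: "\<forall>v1\<in>bforms d. \<forall>v2\<in>bforms d. deriv (fp_line ip p u1 u2 v1 v2) 0 = 0"
    and hess: "\<forall>v1\<in>bforms d. \<forall>v2\<in>bforms d. deriv (deriv (fp_line ip p u1 u2 v1 v2)) 0 \<ge> 0"
  shows "sos_critical (cutoff_functional ip (2 * d) (u1^2 + u2^2 - p)) (\<lambda>m. ip m m) d u1 u2"
proof -
  interpret bform_inner ip "2 * d"
    by (rule bform_inner.intro[OF ip])
  define r where "r = u1^2 + u2^2 - p"
  have r: "r \<in> bforms (2 * d)"
    unfolding r_def using p u by simp
  show ?thesis
    unfolding r_def[symmetric]
  proof
    show "cutoff_functional ip (2 * d) r (x + y) = cutoff_functional ip (2 * d) r x + cutoff_functional ip (2 * d) r y"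
      "cutoff_functional ip (2 * d) r (smult c x) = c * cutoff_functional ip (2 * d) r x" for x y c
      using r by (simp_all add: cutoff_functional_add cutoff_functional_smult)
    show "degree u1 \<le> d" "degree u2 \<le> d"
      using u unfolding bforms_def by simp_all
    fix v1 v2 :: "real poly"
    assume "degree v1 \<le> d" "degree v2 \<le> d"
    then have v: "v1 \<in> bforms d" "v2 \<in> bforms d"
      unfolding bforms_def by simp_all
    show "cutoff_functional ip (2 * d) r (u1 * v1 + u2 * v2) = 0"
      using grad v fp_line_derivatives(1)[OF ip p u v] u unfolding r_def by (simp add: cutoff_functional_eq)
    have "cutoff_functional ip (2 * d) r (v1^2) + cutoff_functional ip (2 * d) r (v2^2) = ip r (v1^2 + v2^2)"
      using v r by (simp add: cutoff_functional_eq ip_add_right)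
    moreover have "0 \<le> deriv (deriv (fp_line ip p u1 u2 v1 v2)) 0"
      using hess v by blast
    ultimately show "0 \<le> 2 * ip (u1 * v1 + u2 * v2) (u1 * v1 + u2 * v2)
        + cutoff_functional ip (2 * d) r (v1^2) + cutoff_functional ip (2 * d) r (v2^2)"
      unfolding fp_line_derivatives(2)[OF ip p u v] r_def by linarith
  qed
qed

theorem corollary6p1:
  fixes d :: nat and ip :: "real poly \<Rightarrow> real poly \<Rightarrow> real" and p u1 u2 :: "real poly"
  assumes ip: "inner_prod_on (bforms (2 * d)) ip"
    and p: "p \<in> bforms (2 * d)"
    and u: "u1 \<in> bforms d" "u2 \<in> bforms d"
    and grad: "\<forall>v1\<in>bforms d. \<forall>v2\<in>bforms d. deriv (fp_line ip p u1 u2 v1 v2) 0 = 0"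
    and hess: "\<forall>v1\<in>bforms d. \<forall>v2\<in>bforms d. deriv (deriv (fp_line ip p u1 u2 v1 v2)) 0 \<ge> 0"
  shows "u1^2 + u2^2 \<in> sos_cone d \<and>
         (\<forall>q\<in>sos_cone d. fp ip p u1 u2 \<le> ip (q - p) (q - p))"
proof -
  interpret bform_inner ip "2 * d"
    by (rule bform_inner.intro[OF ip])
  define r where "r = u1^2 + u2^2 - p"
  define s where "s = u1^2 + u2^2"
  interpret sos_critical "cutoff_functional ip (2 * d) r" "\<lambda>m. ip m m" d u1 u2
    unfolding r_def by (rule second_order_critical_imp_sos_critical[OF assms])
  have rs: "r \<in> bforms (2 * d)" "s \<in> bforms (2 * d)"
    unfolding r_def s_def using p u by simp_all
  have "fp ip p u1 u2 \<le> ip (q - p) (q - p)" if q: "q \<in> sos_cone d" for q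
  proof -
    have "q \<in> bforms (2 * d)"
      using q sos_cone_subset_bforms by blast
    then have "ip r (q - s) = cutoff_functional ip (2 * d) r (q - s)"
      using rs by (simp add: cutoff_functional_eq)
    also have "\<dots> = cutoff_functional ip (2 * d) r q"
      using L_sum_squares_critical unfolding s_def by (simp add: L_diff)
    finally have "ip r r \<le> ip (r + (q - s)) (r + (q - s))"
      using rs \<open>q \<in> bforms (2 * d)\<close> sos_nonneg[OF q] by (intro ip_self_le_add) simp_all
    then show ?thesis
      unfolding fp_def r_def s_def by simp
  qed
  moreover have "u1^2 + u2^2 \<in> sos_cone d"
    unfolding sos_cone_def using u by (intro CollectI exI[of _ "[u1, u2]"]) simp
  ultimately show ?thesis
    by blast
qed

end
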